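(* If $\Phi\in\bar\nabla_2$, then there exists $\theta\in(0,1)$ such that the function $t\mapsto\Phi(t^\theta)$ belongs to $\bar\nabla_2$.
   Context: $\bar{\mathcal{P}}$ is the set of all increasing (nondecreasing) $\Phi:[0,\infty]\to[0,\infty]$ such that, with $a(\Phi)=\sup\{t\ge0:\Phi(t)=0\}$ and $b(\Phi)=\inf\{t\ge0:\Phi(t)=\infty\}$ ($\sup\emptyset=0$, $\inf\emptyset=\infty$): $0\le a(\Phi)<\infty$, $0<b(\Phi)\le\infty$; $\lim_{t\to0+}\Phi(t)=\Phi(0)=0$; $\Phi$ is left continuous on $[0,b(\Phi))$; if $b(\Phi)=\infty$ then $\lim_{t\to\infty}\Phi(t)=\Phi(\infty)=\infty$; if $b(\Phi)<\infty$ then $\lim_{t\to b(\Phi)-0}\Phi(t)=\Phi(b(\Phi))$. $\bar\nabla_2$ is the set of $\Phi\in\bar{\mathcal{P}}$ for which there is a constant $k>1$ with $\Phi(t)\le\frac1{2k}\Phi(kt)$ for all $t>0$. *)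

theory Defs
  imports "HOL-Analysis.Analysis"
begin

definition a_of :: "(ennreal \<Rightarrow> ennreal) \<Rightarrow> ennreal" where
  "a_of \<Phi> = Sup {t. \<Phi> t = 0}"

definition b_of :: "(ennreal \<Rightarrow> ennreal) \<Rightarrow> ennreal" where
  "b_of \<Phi> = Inf {t. \<Phi> t = \<infinity>}"

definition Pbar :: "(ennreal \<Rightarrow> ennreal) set" where
  "Pbar = {\<Phi>. mono \<Phi>
      \<and> a_of \<Phi> < \<infinity> \<and> 0 < b_of \<Phi>
      \<and> \<Phi> 0 = 0 \<and> (\<Phi> \<longlongrightarrow> 0) (at_right 0)
      \<and> (\<forall>t. 0 < t \<and> t < b_of \<Phi> \<longrightarrow> (\<Phi> \<longlongrightarrow> \<Phi> t) (at_left t))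
      \<and> (b_of \<Phi> = \<infinity> \<longrightarrow> (\<Phi> \<longlongrightarrow> \<infinity>) (at_left \<infinity>) \<and> \<Phi> \<infinity> = \<infinity>)
      \<and> (b_of \<Phi> < \<infinity> \<longrightarrow> (\<Phi> \<longlongrightarrow> \<Phi> (b_of \<Phi>)) (at_left (b_of \<Phi>)))}"

definition Nabla2bar :: "(ennreal \<Rightarrow> ennreal) set" where
  "Nabla2bar = {\<Phi> \<in> Pbar. \<exists>k::real. k > 1 \<and>
      (\<forall>t. t > 0 \<longrightarrow> \<Phi> t \<le> \<Phi> (ennreal k * t) / (2 * ennreal k))}"

definition epowr :: "ennreal \<Rightarrow> real \<Rightarrow> ennreal" where
  "epowr t \<theta> = (if t = \<infinity> then \<infinity> else ennreal (enn2real t powr \<theta>))"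

end

theory Submission imports Defs begin

text \<open>Two applications of the \<open>\<nabla>\<^sub>2\<close>-condition with constant \<open>k\<close> give
  \<open>\<Phi> t \<le> \<Phi> (k\<^sup>2 t) / (2K)\<close> for \<open>K = 2k\<^sup>2\<close>. Choosing \<open>\<theta> = log\<^sub>K (k\<^sup>2) \<in> (0,1)\<close> makes
  \<open>(K t)\<^sup>\<theta> = k\<^sup>2 t\<^sup>\<theta>\<close>, so \<open>t \<mapsto> \<Phi> (t\<^sup>\<theta>)\<close> satisfies the \<open>\<nabla>\<^sub>2\<close>-condition with constant \<open>K\<close>.
  Membership in \<open>Pbar\<close> survives the substitution because \<open>t \<mapsto> t\<^sup>\<theta>\<close> is an order
  automorphism of \<open>[0,\<infinity>]\<close>.\<close>

lemma strict_mono_surj_bot: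
  fixes g :: "'a::{linorder,order_bot} \<Rightarrow> 'b::{linorder,order_bot}"
  assumes "strict_mono g" "surj g"
  shows "g bot = bot"
proof -
  obtain x where "g x = bot" using \<open>surj g\<close> by (metis surjD)
  moreover have "g bot \<le> g x" using \<open>strict_mono g\<close> by (simp add: strict_mono_less_eq)
  ultimately show ?thesis by (simp add: bot_unique)
qed

lemma strict_mono_surj_top:
  fixes g :: "'a::{linorder,order_top} \<Rightarrow> 'b::{linorder,order_top}"
  assumes "strict_mono g" "surj g"
  shows "g top = top"
proof -
  obtain x where "g x = top" using \<open>surj g\<close> by (metis surjD)
  moreover have "g x \<le> g top" using \<open>strict_mono g\<close> by (simp add: strict_mono_less_eq)
  ultimately show ?thesis by (simp add: top_unique)
qed

lemma strict_mono_surj_Inf_image: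
  fixes g :: "'a::complete_linorder \<Rightarrow> 'b::complete_linorder"
  assumes g: "strict_mono g" "surj g"
  shows "g (Inf A) = Inf (g ` A)"
proof (rule antisym)
  show "g (Inf A) \<le> Inf (g ` A)"
    using g(1) by (intro INF_greatest) (simp add: strict_mono_less_eq Inf_lower)
  obtain x where x: "g x = Inf (g ` A)" using \<open>surj g\<close> by (metis surjD)
  have "x \<le> Inf A"
  proof (rule Inf_greatest)
    fix a assume "a \<in> A"
    then have "g x \<le> g a" unfolding x by (rule INF_lower)
    then show "x \<le> a" using g(1) by (simp add: strict_mono_less_eq)
  qed
  then have "g x \<le> g (Inf A)" using g(1) by (simp add: strict_mono_less_eq)
  then show "Inf (g ` A) \<le> g (Inf A)" unfolding x .
qed

lemma strict_mono_surj_Sup_image: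
  fixes g :: "'a::complete_linorder \<Rightarrow> 'b::complete_linorder"
  assumes g: "strict_mono g" "surj g"
  shows "g (Sup A) = Sup (g ` A)"
proof (rule antisym)
  show "Sup (g ` A) \<le> g (Sup A)"
    using g(1) by (intro SUP_least) (simp add: strict_mono_less_eq Sup_upper)
  obtain x where x: "g x = Sup (g ` A)" using \<open>surj g\<close> by (metis surjD)
  have "Sup A \<le> x"
  proof (rule Sup_least)
    fix a assume "a \<in> A"
    then have "g a \<le> g x" unfolding x by (rule SUP_upper)
    then show "a \<le> x" using g(1) by (simp add: strict_mono_less_eq)
  qed
  then have "g (Sup A) \<le> g x" using g(1) by (simp add: strict_mono_less_eq)
  then show "g (Sup A) \<le> Sup (g ` A)" unfolding x .
qed

lemma strict_mono_surj_filterlim_at_left: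
  fixes g :: "'a::linorder_topology \<Rightarrow> 'b::linorder_topology"
  assumes g: "strict_mono g" "surj g" and "y < x"
  shows "filterlim g (at_left (g x)) (at_left x)"
  unfolding filterlim_def le_filter_def eventually_filtermap
proof (intro allI impI)
  fix P assume "eventually P (at_left (g x))"
  then obtain b where b: "b < g x" "\<forall>z>b. z < g x \<longrightarrow> P z"
    using eventually_at_left[of "g y" "g x"] \<open>y < x\<close> g by (auto simp: strict_mono_less)
  obtain c where "b = g c" using \<open>surj g\<close> by (metis surjD)
  with b g have "c < x" "\<forall>z>c. z < x \<longrightarrow> P (g z)" by (auto simp: strict_mono_less)
  then show "eventually (\<lambda>z. P (g z)) (at_left x)"
    using eventually_at_left[OF \<open>y < x\<close>] by auto
qed

lemma strict_mono_surj_filterlim_at_right: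
  fixes g :: "'a::linorder_topology \<Rightarrow> 'b::linorder_topology"
  assumes g: "strict_mono g" "surj g" and "x < y"
  shows "filterlim g (at_right (g x)) (at_right x)"
  unfolding filterlim_def le_filter_def eventually_filtermap
proof (intro allI impI)
  fix P assume "eventually P (at_right (g x))"
  then obtain b where b: "g x < b" "\<forall>z>g x. z < b \<longrightarrow> P z"
    using eventually_at_right[of "g x" "g y"] \<open>x < y\<close> g by (auto simp: strict_mono_less)
  obtain c where "b = g c" using \<open>surj g\<close> by (metis surjD)
  with b g have "x < c" "\<forall>z>x. z < c \<longrightarrow> P (g z)" by (auto simp: strict_mono_less)
  then show "eventually (\<lambda>z. P (g z)) (at_right x)"
    using eventually_at_right[OF \<open>x < y\<close>] by auto
qed

lemma Pbar_comp_strict_mono_surj: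
  fixes g :: "ennreal \<Rightarrow> ennreal"
  assumes g: "strict_mono g" "surj g" and "\<Phi> \<in> Pbar"
  shows "(\<lambda>t. \<Phi> (g t)) \<in> Pbar"
proof -
  have mono: "mono \<Phi>" and a: "a_of \<Phi> < \<infinity>" and b: "0 < b_of \<Phi>" and "\<Phi> 0 = 0"
    and lim0: "(\<Phi> \<longlongrightarrow> 0) (at_right 0)"
    and lc: "\<And>t. 0 < t \<Longrightarrow> t < b_of \<Phi> \<Longrightarrow> (\<Phi> \<longlongrightarrow> \<Phi> t) (at_left t)"
    and b_top: "b_of \<Phi> = \<infinity> \<Longrightarrow> (\<Phi> \<longlongrightarrow> \<infinity>) (at_left \<infinity>) \<and> \<Phi> \<infinity> = \<infinity>"
    and b_fin: "b_of \<Phi> < \<infinity> \<Longrightarrow> (\<Phi> \<longlongrightarrow> \<Phi> (b_of \<Phi>)) (at_left (b_of \<Phi>))"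
    using \<open>\<Phi> \<in> Pbar\<close> unfolding Pbar_def by auto
  let ?\<Psi> = "\<lambda>t. \<Phi> (g t)"
  have less: "g x < g y \<longleftrightarrow> x < y" and le: "g x \<le> g y \<longleftrightarrow> x \<le> y" for x y
    using g(1) by (simp_all add: strict_mono_less strict_mono_less_eq)
  have g0: "g 0 = 0" and g_top: "g \<infinity> = \<infinity>"
    using strict_mono_surj_bot[OF g] strict_mono_surj_top[OF g] by (simp_all add: bot_ennreal)
  have preimage: "g ` {t. g t \<in> S} = S" for S
    using \<open>surj g\<close> by (auto simp: image_iff surj_def)
  have ga: "g (a_of ?\<Psi>) = a_of \<Phi>"
    unfolding a_of_def using preimage[of "{t. \<Phi> t = 0}"] strict_mono_surj_Sup_image[OF g] by simp
  have gb: "g (b_of ?\<Psi>) = b_of \<Phi>"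
    unfolding b_of_def using preimage[of "{t. \<Phi> t = \<infinity>}"] strict_mono_surj_Inf_image[OF g] by simp
  have "0 < b_of ?\<Psi>" using b gb g0 less by metis
  have left: "(?\<Psi> \<longlongrightarrow> \<Phi> (g t)) (at_left t)"
    if "(\<Phi> \<longlongrightarrow> \<Phi> (g t)) (at_left (g t))" "0 < t" for t
    using filterlim_compose[OF that(1) strict_mono_surj_filterlim_at_left[OF g \<open>0 < t\<close>]] .
  have "mono ?\<Psi>" using mono le by (simp add: mono_def)
  moreover have "a_of ?\<Psi> < \<infinity>" using a ga g_top less by metis
  moreover have "(?\<Psi> \<longlongrightarrow> 0) (at_right 0)"
    using filterlim_compose[OF _ strict_mono_surj_filterlim_at_right[OF g zero_less_one]] lim0 g0
    by simp
  moreover have "(?\<Psi> \<longlongrightarrow> ?\<Psi> t) (at_left t)" if "0 < t" "t < b_of ?\<Psi>" for t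
    using that lc[of "g t"] left g0 gb less by metis
  moreover have "(?\<Psi> \<longlongrightarrow> \<infinity>) (at_left \<infinity>) \<and> ?\<Psi> \<infinity> = \<infinity>" if "b_of ?\<Psi> = \<infinity>"
    using that b_top left[of \<infinity>] gb g_top by auto
  moreover have "(?\<Psi> \<longlongrightarrow> ?\<Psi> (b_of ?\<Psi>)) (at_left (b_of ?\<Psi>))" if "b_of ?\<Psi> < \<infinity>"
    using that b_fin left \<open>0 < b_of ?\<Psi>\<close> gb g_top less by metis
  ultimately show ?thesis
    using \<open>0 < b_of ?\<Psi>\<close> \<open>\<Phi> 0 = 0\<close> g0 unfolding Pbar_def by auto
qed

lemma strict_mono_epowr:
  assumes "0 < \<theta>"
  shows "strict_mono (\<lambda>t. epowr t \<theta>)"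
proof (rule strict_monoI)
  fix x y :: ennreal
  assume "x < y"
  then have "x \<noteq> \<infinity>" by auto
  show "epowr x \<theta> < epowr y \<theta>"
  proof (cases "y = \<infinity>")
    case True
    with \<open>x \<noteq> \<infinity>\<close> show ?thesis by (simp add: epowr_def)
  next
    case False
    with \<open>x < y\<close> have "enn2real x < enn2real y"
      by (simp add: enn2real_less_iff top.not_eq_extremum)
    then have "enn2real x powr \<theta> < enn2real y powr \<theta>"
      using \<open>0 < \<theta>\<close> by (intro powr_less_mono2) auto
    with False \<open>x \<noteq> \<infinity>\<close> show ?thesis by (simp add: epowr_def ennreal_less_iff)
  qed
qed

lemma surj_epowr:
  assumes "0 < \<theta>"
  shows "surj (\<lambda>t. epowr t \<theta>)"
proof (rule surjI)
  fix s
  show "epowr (if s = \<infinity> then \<infinity> else ennreal (enn2real s powr (1 / \<theta>))) \<theta> = s"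
    using \<open>0 < \<theta>\<close> by (simp add: epowr_def powr_powr ennreal_enn2real_if)
qed

lemma epowr_mult_ennreal:
  assumes "0 < \<theta>" "0 < K"
  shows "epowr (ennreal K * t) \<theta> = ennreal (K powr \<theta>) * epowr t \<theta>"
proof (cases "t = \<infinity>")
  case True
  with assms show ?thesis by (simp add: epowr_def ennreal_mult_top)
next
  case False
  with assms show ?thesis
    by (simp add: epowr_def ennreal_mult_eq_top_iff enn2real_mult powr_mult ennreal_mult)
qed

lemma Nabla2_condition_iterate:
  fixes \<Phi> :: "ennreal \<Rightarrow> ennreal"
  assumes "0 < k" and doubling: "\<And>t. 0 < t \<Longrightarrow> \<Phi> t \<le> \<Phi> (ennreal k * t) / (2 * ennreal k)"
    and "0 < t"
  shows "\<Phi> t \<le> \<Phi> (ennreal k ^ n * t) / (2 * ennreal k) ^ n"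
proof (induction n)
  case 0
  show ?case by (simp add: divide_ennreal_def)
next
  case (Suc n)
  have "0 < ennreal k ^ n * t"
    using \<open>0 < k\<close> \<open>0 < t\<close> by (simp add: ennreal_zero_less_mult_iff ennreal_power)
  note Suc.IH
  also have "\<Phi> (ennreal k ^ n * t) / (2 * ennreal k) ^ n
      \<le> \<Phi> (ennreal k * (ennreal k ^ n * t)) / (2 * ennreal k) / (2 * ennreal k) ^ n"
    using \<open>0 < ennreal k ^ n * t\<close> by (intro divide_right_mono_ennreal doubling)
  also have "\<dots> = \<Phi> (ennreal k ^ Suc n * t) / (2 * ennreal k) ^ Suc n"
    using \<open>0 < k\<close>
    by (simp add: divide_ennreal_def ennreal_inverse_mult' mult.assoc ennreal_zero_less_mult_iff)
  finally show ?case .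
qed

theorem lemma4p5:
  fixes \<Phi> :: "ennreal \<Rightarrow> ennreal"
  assumes "\<Phi> \<in> Nabla2bar"
  shows "\<exists>\<theta>::real. 0 < \<theta> \<and> \<theta> < 1 \<and> (\<lambda>t. \<Phi> (epowr t \<theta>)) \<in> Nabla2bar"
proof -
  obtain k :: real where "\<Phi> \<in> Pbar" "1 < k"
    and doubling: "\<And>t. 0 < t \<Longrightarrow> \<Phi> t \<le> \<Phi> (ennreal k * t) / (2 * ennreal k)"
    using assms unfolding Nabla2bar_def by auto
  define K where "K = 2 * k\<^sup>2"
  define \<theta> where "\<theta> = log K (k\<^sup>2)"
  have "1 < k\<^sup>2" using \<open>1 < k\<close> by (simp add: one_less_power)
  then have "1 < K" "k\<^sup>2 < K" unfolding K_def by auto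
  then have "0 < \<theta>" "\<theta> < 1" "K powr \<theta> = k\<^sup>2"
    using \<open>1 < k\<^sup>2\<close> less_trans[OF zero_less_one \<open>1 < k\<^sup>2\<close>] unfolding \<theta>_def by simp_all
  have "(\<lambda>t. \<Phi> (epowr t \<theta>)) \<in> Pbar"
    using Pbar_comp_strict_mono_surj strict_mono_epowr surj_epowr \<open>\<Phi> \<in> Pbar\<close> \<open>0 < \<theta>\<close> by blast
  moreover have "\<Phi> (epowr t \<theta>) \<le> \<Phi> (epowr (ennreal K * t) \<theta>) / (2 * ennreal K)" if "0 < t" for t
  proof -
    have "epowr 0 \<theta> < epowr t \<theta>"
      using strict_monoD[OF strict_mono_epowr[OF \<open>0 < \<theta>\<close>] \<open>0 < t\<close>] by simp
    then have "0 < epowr t \<theta>" by (simp add: epowr_def)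
    moreover have "epowr (ennreal K * t) \<theta> = ennreal k ^ 2 * epowr t \<theta>"
      using epowr_mult_ennreal[OF \<open>0 < \<theta>\<close>] \<open>1 < K\<close> \<open>K powr \<theta> = k\<^sup>2\<close> \<open>1 < k\<close> by (simp add: ennreal_power)
    moreover have "2 * ennreal K = (2 * ennreal k) ^ 2"
      using \<open>1 < k\<close> unfolding K_def by (simp add: power_mult_distrib ennreal_power ennreal_mult)
    ultimately show ?thesis
      using Nabla2_condition_iterate[of k \<Phi> "epowr t \<theta>" 2] \<open>1 < k\<close> doubling by simp
  qed
  ultimately show ?thesis
    using \<open>0 < \<theta>\<close> \<open>\<theta> < 1\<close> \<open>1 < K\<close> unfolding Nabla2bar_def by auto
qed

end
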